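(* Let $n\ge1$ and let $b_1,\ldots,b_n,b',c_1,\ldots,c_n,c'$ be complex parameters. Let $\delta_1=t_1\,\partial/\partial t_1$, $\delta_2=(t_2-1)\,\partial/\partial t_2$, and consider the system of linear partial differential equations for $z(t_1,t_2)$ \begin{align*} &\Big[t_1(\delta_1+\delta_2+c')\Big\{\prod_{i=1}^n(\delta_1+b_i)\Big\}-\delta_1\Big\{\prod_{i=1}^n(\delta_1+c_i-1)\Big\}\Big]z=0,\\ &\{(1-t_2)(\delta_1+\delta_2+c')(\delta_2+b')-\delta_2(\delta_2+c'-1)\}z=0,\\ &\Big[t_1\delta_2\Big\{\prod_{i=1}^n(\delta_1+b_i)\Big\}+\{(1-t_2)(\delta_2+b')-\delta_2\}\Big\{\prod_{i=1}^n(\delta_1+c_i-1)\Big\}\Big]z=0. \end{align*} Let $D_1=s_1\,\partial/\partial s_1$, $D_2=s_2\,\partial/\partial s_2$, $D=D_1+D_2$, and consider the system for $y(s_1,s_2)$ \begin{align*} &\Big[s_1(D_1+\beta_1)\Big\{\prod_{i=1}^n(D+\alpha_i)\Big\}-D_1\Big\{\prod_{i=1}^n(D+\gamma_i-1)\Big\}\Big]y=0,\\ &\Big[s_2(D_2+\beta_2)\Big\{\prod_{i=1}^n(D+\alpha_i)\Big\}-D_2\Big\{\prod_{i=1}^n(D+\gamma_i-1)\Big\}\Big]y=0,\\ &\{s_1(D_1+\beta_1)D_2-s_2(D_2+\beta_2)D_1\}y=0, \end{align*} with $\alpha_i=b_i$, $\gamma_i=c_i$ ($i=1,\ldots,n$),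 $\beta_1=c'-b'$, $\beta_2=b'$. Then the first system is transformed into the second system by the change of variables \[ s_1=t_1,\qquad s_2=\frac{t_1}{t_2},\qquad y=t_2^{b'}z . \]
   Context: Products of commuting operators denote composition. "Transformed into" means that, after rewriting the operators in the new variables $s_1=t_1$, $s_2=t_1/t_2$ and conjugating by the factor $t_2^{b'}$, the first system becomes equivalent to the second, so that $z$ solves the first system exactly when $y=t_2^{b'}z$ solves the second. *)

theory Defs
  imports "HOL-Analysis.Analysis"
begin

type_synonym fn2 = "complex \<times> complex \<Rightarrow> complex"
type_synonym op2 = "fn2 \<Rightarrow> fn2"

definition holo2 :: "fn2 \<Rightarrow> (complex \<times> complex) set \<Rightarrow> bool" where
  "holo2 f U \<longleftrightarrow> open U \<and>
     (\<forall>p\<in>U. \<exists>a b. (f has_derivative (\<lambda>(u, v). a * u + b * v)) (at p))"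

definition pd1 :: op2 where
  "pd1 f = (\<lambda>(x, y). deriv (\<lambda>u. f (u, y)) x)"
definition pd2 :: op2 where
  "pd2 f = (\<lambda>(x, y). deriv (\<lambda>v. f (x, v)) y)"

definition opadd :: "op2 \<Rightarrow> op2 \<Rightarrow> op2" where
  "opadd A B = (\<lambda>f p. A f p + B f p)"
definition opsub :: "op2 \<Rightarrow> op2 \<Rightarrow> op2" where
  "opsub A B = (\<lambda>f p. A f p - B f p)"
definition opshift :: "op2 \<Rightarrow> complex \<Rightarrow> op2" where
  "opshift A c = (\<lambda>f p. A f p + c * f p)"
definition opmul :: "fn2 \<Rightarrow> op2 \<Rightarrow> op2" where
  "opmul g A = (\<lambda>f p. g p * A f p)"

text \<open>Composition product L 0 ... L (k-1) (order immaterial for commuting factors).\<close>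
fun opprod :: "(nat \<Rightarrow> op2) \<Rightarrow> nat \<Rightarrow> op2" where
  "opprod L 0 = id"
| "opprod L (Suc k) = L k \<circ> opprod L k"

definition delta1 :: op2 where
  "delta1 f = (\<lambda>(t1, t2). t1 * pd1 f (t1, t2))"
definition delta2 :: op2 where
  "delta2 f = (\<lambda>(t1, t2). (t2 - 1) * pd2 f (t1, t2))"

definition sys1 :: "nat \<Rightarrow> (nat \<Rightarrow> complex) \<Rightarrow> (nat \<Rightarrow> complex) \<Rightarrow> complex \<Rightarrow> complex
    \<Rightarrow> fn2 \<Rightarrow> (complex \<times> complex) set \<Rightarrow> bool" where
  "sys1 n b c b' c' z U \<longleftrightarrow>
    (let Pb = opprod (\<lambda>i. opshift delta1 (b i)) n;
         Pc = opprod (\<lambda>i. opshift delta1 (c i - 1)) n;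
         T = opshift (opadd delta1 delta2) c';
         E1 = opsub (opmul fst (T \<circ> Pb)) (delta1 \<circ> Pc);
         E2 = opsub (opmul (\<lambda>(t1, t2). 1 - t2) (T \<circ> opshift delta2 b'))
                    (delta2 \<circ> opshift delta2 (c' - 1));
         E3 = opadd (opmul fst (delta2 \<circ> Pb))
                    (opsub (opmul (\<lambda>(t1, t2). 1 - t2) (opshift delta2 b')) delta2 \<circ> Pc)
     in \<forall>p\<in>U. E1 z p = 0 \<and> E2 z p = 0 \<and> E3 z p = 0)"

definition D1 :: op2 where
  "D1 f = (\<lambda>(s1, s2). s1 * pd1 f (s1, s2))"
definition D2 :: op2 where
  "D2 f = (\<lambda>(s1, s2). s2 * pd2 f (s1, s2))"

definition sys2 :: "nat \<Rightarrow> (nat \<Rightarrow> complex) \<Rightarrow> complex \<Rightarrow> complex \<Rightarrow> (nat \<Rightarrow> complex)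
    \<Rightarrow> fn2 \<Rightarrow> (complex \<times> complex) set \<Rightarrow> bool" where
  "sys2 n \<alpha> \<beta>1 \<beta>2 \<gamma> y V \<longleftrightarrow>
    (let D = opadd D1 D2;
         Qa = opprod (\<lambda>i. opshift D (\<alpha> i)) n;
         Qc = opprod (\<lambda>i. opshift D (\<gamma> i - 1)) n;
         F1 = opsub (opmul fst (opshift D1 \<beta>1 \<circ> Qa)) (D1 \<circ> Qc);
         F2 = opsub (opmul snd (opshift D2 \<beta>2 \<circ> Qa)) (D2 \<circ> Qc);
         F3 = opsub (opmul fst (opshift D1 \<beta>1 \<circ> D2)) (opmul snd (opshift D2 \<beta>2 \<circ> D1))
     in \<forall>p\<in>V. F1 y p = 0 \<and> F2 y p = 0 \<and> F3 y p = 0)"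

text \<open>Change of variables s1 = t1, s2 = t1/t2, and y = t2 powr b' * z.\<close>
definition cov :: "complex \<times> complex \<Rightarrow> complex \<times> complex" where
  "cov = (\<lambda>(t1, t2). (t1, t1 / t2))"

definition ytrans :: "complex \<Rightarrow> fn2 \<Rightarrow> fn2" where
  "ytrans b' z = (\<lambda>(s1, s2). (s1 / s2) powr b' * z (s1, s1 / s2))"

text \<open>Domain where the change of variables and the principal branch of t2 powr b' are holomorphic.\<close>
definition Dom :: "(complex \<times> complex) set" where
  "Dom = {(t1, t2). t1 \<noteq> 0 \<and> \<not> (Im t2 = 0 \<and> Re t2 \<le> 0)}"

end

theory Submission
  imports Defs "HOL-Complex_Analysis.Complex_Analysis"
begin

text \<open>
  Under the substitution \<open>s = cov t\<close>, \<open>y = t2 powr b' * z\<close>, the operators \<open>D1, D2\<close> of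
  the second system act on \<open>z\<close> as \<open>T1 = t1 \<partial>1 + t2 \<partial>2 + b'\<close> and
  \<open>T2 = - (t2 \<partial>2 + b')\<close>; in particular \<open>D = D1 + D2\<close> becomes \<open>\<delta>1\<close>. Thus the second
  system is equivalent to three equations \<open>G1 = G2 = G3 = 0\<close> in the variables \<open>t\<close>, and a direct
  computation gives \<open>E1 = G1 + G2\<close>, \<open>E3 = (1 - t2) G2\<close> and \<open>t1 E2 = (t2 - 1) G3\<close> for the
  three equations \<open>Ei = 0\<close> of the first system; the factor \<open>t2 - 1\<close> is removed by continuity.

  These computations need all partial derivatives of \<open>z\<close> to be complex differentiable again,
  with commuting mixed partials. This follows one variable at a time from the Cauchy integral
  formula, differentiating under the integral sign.
\<close>

section \<open>Complex differentiability in two variables\<close>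

definition linform :: "complex \<Rightarrow> complex \<Rightarrow> complex \<times> complex \<Rightarrow> complex" where
  "linform a b = (\<lambda>(u, v). a * u + b * v)"

lemma holo2_iff:
  "holo2 f U \<longleftrightarrow> open U \<and> (\<forall>p\<in>U. \<exists>a b. (f has_derivative linform a b) (at p))"
  by (simp add: holo2_def linform_def)

lemma holo2I:
  assumes "open U" "\<And>p. p \<in> U \<Longrightarrow> (f has_derivative linform (a p) (b p)) (at p)"
  shows "holo2 f U"
  using assms by (auto simp: holo2_iff)

lemma holo2_open: "holo2 f U \<Longrightarrow> open U"
  by (simp add: holo2_def)

lemma has_field_derivative_slice1:
  assumes "(f has_derivative linform a b) (at (x, y))"
  shows "((\<lambda>u. f (u, y)) has_field_derivative a) (at x)"
proof -
  have "((\<lambda>u. (u, y)) has_derivative (\<lambda>h. (h, 0))) (at x)"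
    by (auto intro!: derivative_eq_intros)
  from has_derivative_compose[OF this assms] show ?thesis
    by (simp add: has_field_derivative_def linform_def o_def)
qed

lemma has_field_derivative_slice2:
  assumes "(f has_derivative linform a b) (at (x, y))"
  shows "((\<lambda>v. f (x, v)) has_field_derivative b) (at y)"
proof -
  have "((\<lambda>v. (x, v)) has_derivative (\<lambda>h. (0, h))) (at y)"
    by (auto intro!: derivative_eq_intros)
  from has_derivative_compose[OF this assms] show ?thesis
    by (simp add: has_field_derivative_def linform_def o_def)
qed

lemma pd1_eqI: "((\<lambda>u. f (u, y)) has_field_derivative d) (at x) \<Longrightarrow> pd1 f (x, y) = d"
  by (simp add: pd1_def DERIV_imp_deriv)

lemma pd2_eqI: "((\<lambda>v. f (x, v)) has_field_derivative d) (at y) \<Longrightarrow> pd2 f (x, y) = d"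
  by (simp add: pd2_def DERIV_imp_deriv)

lemma holo2_has_derivative:
  assumes "holo2 f U" "p \<in> U"
  shows "(f has_derivative linform (pd1 f p) (pd2 f p)) (at p)"
proof -
  obtain x y where p: "p = (x, y)" by force
  from assms obtain a b where d: "(f has_derivative linform a b) (at p)"
    by (auto simp: holo2_iff)
  have "pd1 f p = a" "pd2 f p = b"
    using pd1_eqI[OF has_field_derivative_slice1[of f a b x y]]
      pd2_eqI[OF has_field_derivative_slice2[of f a b x y]] d
    by (simp_all add: p)
  with d show ?thesis by simp
qed

lemma holo2_DERIV_pd1:
  "holo2 f U \<Longrightarrow> (x, y) \<in> U \<Longrightarrow> ((\<lambda>u. f (u, y)) has_field_derivative pd1 f (x, y)) (at x)"
  by (rule has_field_derivative_slice1[OF holo2_has_derivative])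

lemma holo2_DERIV_pd2:
  "holo2 f U \<Longrightarrow> (x, y) \<in> U \<Longrightarrow> ((\<lambda>v. f (x, v)) has_field_derivative pd2 f (x, y)) (at y)"
  by (rule has_field_derivative_slice2[OF holo2_has_derivative])

lemma holo2_continuous_on: "holo2 f U \<Longrightarrow> continuous_on U f"
  by (metis continuous_at_imp_continuous_on has_derivative_continuous holo2_has_derivative)

lemma holo2_slice1_holomorphic: "holo2 f U \<Longrightarrow> (\<lambda>u. f (u, y)) holomorphic_on {u. (u, y) \<in> U}"
  unfolding holomorphic_on_def field_differentiable_def
  by (blast intro: has_field_derivative_at_within holo2_DERIV_pd1)

lemma open_slice1: "open (U :: (complex \<times> complex) set) \<Longrightarrow> open {u. (u, y) \<in> U}"
  using continuous_open_vimage[of U "\<lambda>u. (u, y)"] by (simp add: vimage_def continuous_intros)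

lemma open_slice2: "open (U :: (complex \<times> complex) set) \<Longrightarrow> open {v. (x, v) \<in> U}"
  using continuous_open_vimage[of U "\<lambda>v. (x, v)"] by (simp add: vimage_def continuous_intros)

lemma holo2_const: "open U \<Longrightarrow> holo2 (\<lambda>p. c) U"
proof (rule holo2I[where a="\<lambda>_. 0" and b="\<lambda>_. 0"])
  have "linform 0 0 = (\<lambda>_. 0)" by (auto simp: linform_def)
  then show "((\<lambda>p. c) has_derivative linform 0 0) (at p)" for p by simp
qed

lemma holo2_fst: "open U \<Longrightarrow> holo2 fst U"
proof (rule holo2I[where a="\<lambda>_. 1" and b="\<lambda>_. 0"])
  show "(fst has_derivative linform 1 0) (at p)" for p :: "complex \<times> complex"
    using has_derivative_fst[OF has_derivative_ident[of "at p"]] by (simp add: linform_def case_prod_beta')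
qed

lemma holo2_snd: "open U \<Longrightarrow> holo2 snd U"
proof (rule holo2I[where a="\<lambda>_. 0" and b="\<lambda>_. 1"])
  show "(snd has_derivative linform 0 1) (at p)" for p :: "complex \<times> complex"
    using has_derivative_snd[OF has_derivative_ident[of "at p"]] by (simp add: linform_def case_prod_beta')
qed

lemma holo2_add:
  assumes f: "holo2 f U" and g: "holo2 g U"
  shows "holo2 (\<lambda>p. f p + g p) U"
proof (rule holo2I[OF holo2_open[OF f]])
  fix p assume p: "p \<in> U"
  from has_derivative_add[OF holo2_has_derivative[OF f p] holo2_has_derivative[OF g p]]
  show "((\<lambda>p. f p + g p) has_derivative linform (pd1 f p + pd1 g p) (pd2 f p + pd2 g p)) (at p)"
    by (simp add: linform_def case_prod_beta' algebra_simps)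
qed

lemma holo2_mult:
  assumes f: "holo2 f U" and g: "holo2 g U"
  shows "holo2 (\<lambda>p. f p * g p) U"
proof (rule holo2I[OF holo2_open[OF f]])
  fix p assume p: "p \<in> U"
  from has_derivative_mult[OF holo2_has_derivative[OF f p] holo2_has_derivative[OF g p]]
  show "((\<lambda>p. f p * g p) has_derivative
      linform (f p * pd1 g p + pd1 f p * g p) (f p * pd2 g p + pd2 f p * g p)) (at p)"
    by (simp add: linform_def case_prod_beta' algebra_simps)
qed

lemma holo2_cmult: "holo2 f U \<Longrightarrow> holo2 (\<lambda>p. c * f p) U"
  by (rule holo2_mult[OF holo2_const[OF holo2_open]])

lemma holo2_minus: "holo2 f U \<Longrightarrow> holo2 (\<lambda>p. - f p) U"
  using holo2_cmult[of f U "-1"] by simp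

lemma holo2_diff: "holo2 f U \<Longrightarrow> holo2 g U \<Longrightarrow> holo2 (\<lambda>p. f p - g p) U"
  using holo2_add[OF _ holo2_cmult[of g U "-1"]] by simp

lemma holo2_compose_holomorphic:
  assumes g: "holo2 g U" and h: "h holomorphic_on S" "open S" and gS: "\<And>p. p \<in> U \<Longrightarrow> g p \<in> S"
  shows "holo2 (\<lambda>p. h (g p)) U"
proof (rule holo2I[OF holo2_open[OF g]])
  fix p assume p: "p \<in> U"
  have "(h has_derivative (*) (deriv h (g p))) (at (g p))"
    using holomorphic_derivI[OF h gS[OF p]] by (simp add: has_field_derivative_def)
  from has_derivative_compose[OF holo2_has_derivative[OF g p] this]
  show "((\<lambda>p. h (g p)) has_derivative
      linform (deriv h (g p) * pd1 g p) (deriv h (g p) * pd2 g p)) (at p)"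
    by (simp add: linform_def case_prod_beta' algebra_simps)
qed

lemma holo2_compose_pair:
  assumes g: "holo2 g V" and f1: "holo2 f1 U" and f2: "holo2 f2 U"
    and fV: "\<And>p. p \<in> U \<Longrightarrow> (f1 p, f2 p) \<in> V"
  shows "holo2 (\<lambda>p. g (f1 p, f2 p)) U"
proof (rule holo2I[OF holo2_open[OF f1]])
  fix p assume p: "p \<in> U"
  let ?q = "(f1 p, f2 p)"
  from has_derivative_compose[OF has_derivative_Pair[OF holo2_has_derivative[OF f1 p]
      holo2_has_derivative[OF f2 p]] holo2_has_derivative[OF g fV[OF p]]]
  show "((\<lambda>p. g (f1 p, f2 p)) has_derivative
      linform (pd1 g ?q * pd1 f1 p + pd2 g ?q * pd1 f2 p) (pd1 g ?q * pd2 f1 p + pd2 g ?q * pd2 f2 p)) (at p)"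
    by (simp add: linform_def case_prod_beta' algebra_simps o_def)
qed

lemma holo2_opshift: "holo2 (A f) U \<Longrightarrow> holo2 f U \<Longrightarrow> holo2 (opshift A c f) U"
  unfolding opshift_def by (intro holo2_add holo2_cmult)

lemma holo2_opprod:
  assumes "\<And>i g. holo2 g U \<Longrightarrow> holo2 (L i g) U" "holo2 f U"
  shows "holo2 (opprod L n f) U"
  using assms by (induction n) auto

lemma holo2_fst_div_snd:
  assumes "open U" "\<And>p. p \<in> U \<Longrightarrow> snd p \<noteq> 0"
  shows "holo2 (\<lambda>p. fst p / snd p) U"
proof -
  have "(\<lambda>w. inverse w) holomorphic_on - {0}"
    by (rule holomorphic_on_inverse[OF holomorphic_on_ident]) auto
  then have "holo2 (\<lambda>p. inverse (snd p)) U"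
    by (rule holo2_compose_holomorphic[OF holo2_snd[OF assms(1)]]) (use assms(2) in auto)
  then show ?thesis
    unfolding divide_inverse by (rule holo2_mult[OF holo2_fst[OF assms(1)]])
qed

section \<open>Partial derivatives of holomorphic functions\<close>

text \<open>Cauchy integrals over the circle of radius \<open>2 r\<close> around \<open>x0\<close> then represent \<open>pd1 f\<close>
  on all of \<open>ball x0 r \<times> ball y0 r\<close>.\<close>

lemma open_contains_cball_times_ball:
  fixes U :: "(complex \<times> complex) set"
  assumes "open U" "(x0, y0) \<in> U"
  obtains r where "r > 0" "cball x0 (2 * r) \<times> ball y0 r \<subseteq> U"
proof -
  obtain e where e: "e > 0" "ball (x0, y0) e \<subseteq> U"
    using assms open_contains_ball by blast
  have "(u, v) \<in> U" if "u \<in> cball x0 (2 * (e / 5))" "v \<in> ball y0 (e / 5)" for u v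
  proof -
    have "dist (x0, y0) (u, v) \<le> dist x0 u + dist y0 v"
      using norm_Pair_le[of "x0 - u" "y0 - v"] by (simp add: dist_norm)
    also have "\<dots> < e" using that e(1) by (simp add: dist_commute)
    finally show ?thesis using e by auto
  qed
  with e show ?thesis by (intro that[of "e / 5"]) auto
qed

lemma norm_circlepath_minus_center: "R \<ge> 0 \<Longrightarrow> norm (circlepath x0 R t - x0) = R"
  by (simp add: circlepath norm_mult norm_exp_eq_Re)

lemma circlepath_in_cball: "R \<ge> 0 \<Longrightarrow> circlepath x0 R t \<in> cball x0 R"
  using norm_circlepath_minus_center[of R x0 t] by (simp add: dist_norm norm_minus_commute)

lemma circlepath_neq_inner:
  assumes "x \<in> ball x0 R"
  shows "circlepath x0 R t \<noteq> x"
proof -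
  have "R \<ge> 0" using assms zero_le_dist[of x0 x] unfolding mem_ball by linarith
  then show ?thesis
    using norm_circlepath_minus_center[of R x0 t] assms by (auto simp: dist_norm norm_minus_commute)
qed

definition cauchy_kernel :: "fn2 \<Rightarrow> complex \<Rightarrow> real \<Rightarrow> complex \<Rightarrow> complex \<Rightarrow> real \<Rightarrow> complex" where
  "cauchy_kernel f x0 R x y t =
     f (circlepath x0 R t, y) / (circlepath x0 R t - x)^2 * vector_derivative (circlepath x0 R) (at t)"

lemma pd1_eq_cauchy_integral:
  assumes f: "holo2 f U" and disc: "cball x0 R \<times> {y} \<subseteq> U" and x: "x \<in> ball x0 R"
  shows "pd1 f (x, y) = integral {0..1} (cauchy_kernel f x0 R x y) / (2 * of_real pi * \<i>)"
proof -
  have hol: "(\<lambda>u. f (u, y)) holomorphic_on cball x0 R"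
    by (rule holomorphic_on_subset[OF holo2_slice1_holomorphic[OF f]]) (use disc in auto)
  have "((\<lambda>u. f (u, y)) has_field_derivative
      1 / (2 * of_real pi * \<i>) * contour_integral (circlepath x0 R) (\<lambda>u. f (u, y) / (u - x)^2)) (at x)"
    by (rule Cauchy_derivative_integral_circlepath(2)[OF holomorphic_on_imp_continuous_on[OF hol]
          holomorphic_on_subset[OF hol ball_subset_cball] x])
  then show ?thesis
    by (simp add: pd1_eqI contour_integral_integral cauchy_kernel_def[abs_def])
qed

lemma continuous_on_cauchy_kernel:
  assumes g: "continuous_on U g" and R: "R > 0"
    and A: "\<And>x y. (x, y) \<in> A \<Longrightarrow> x \<in> ball x0 R \<and> cball x0 R \<times> {y} \<subseteq> U"
  shows "continuous_on (A \<times> {0..1}) (\<lambda>(p, t). cauchy_kernel g x0 R (fst p) (snd p) t)"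
proof -
  define \<gamma> where "\<gamma> = (\<lambda>t::real. x0 + of_real R * exp (2 * of_real pi * \<i> * of_real t))"
  have circ: "circlepath x0 R = \<gamma>" by (simp add: circlepath \<gamma>_def)
  have circ': "vector_derivative \<gamma> (at t) = 2 * of_real pi * \<i> * of_real R * exp (2 * of_real pi * \<i> * of_real t)"
    for t by (simp add: circ[symmetric] vector_derivative_circlepath)
  have "continuous_on (A \<times> {0..1}) (\<lambda>z. g (\<gamma> (snd z), snd (fst z)))"
  proof (rule continuous_on_compose2[OF g])
    show "continuous_on (A \<times> {0..1}) (\<lambda>z. (\<gamma> (snd z), snd (fst z)))"
      unfolding \<gamma>_def by (intro continuous_intros)
    show "(\<lambda>z. (\<gamma> (snd z), snd (fst z))) ` (A \<times> {0..1}) \<subseteq> U"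
      using A circlepath_in_cball[of R x0] R by (fastforce simp: circ)
  qed
  moreover have "(\<gamma> (snd z) - fst (fst z))^2 \<noteq> 0" if "z \<in> A \<times> {0..1}" for z
    using that A circlepath_neq_inner[of "fst (fst z)" x0 R "snd z"] by (auto simp: circ)
  ultimately have "continuous_on (A \<times> {0..1})
      (\<lambda>z. g (\<gamma> (snd z), snd (fst z)) / (\<gamma> (snd z) - fst (fst z))^2
        * (2 * of_real pi * \<i> * of_real R * exp (2 * of_real pi * \<i> * of_real (snd z))))"
    unfolding \<gamma>_def by (intro continuous_intros) auto
  then show ?thesis
    by (simp add: split_beta cauchy_kernel_def circ circ')
qed

lemma continuous_on_cauchy_integral:
  assumes g: "continuous_on U g" and r: "r > 0" and box: "cball x0 (2 * r) \<times> ball y0 r \<subseteq> U"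
  shows "continuous_on (ball x0 r \<times> ball y0 r)
           (\<lambda>p. integral {0..1} (cauchy_kernel g x0 (2 * r) (fst p) (snd p)))"
proof -
  have "continuous_on ((ball x0 r \<times> ball y0 r) \<times> cbox 0 1)
      (\<lambda>(p, t). cauchy_kernel g x0 (2 * r) (fst p) (snd p) t)"
    unfolding cbox_interval by (rule continuous_on_cauchy_kernel[OF g]) (use r box in auto)
  from integral_continuous_on_param[OF this] show ?thesis by (simp add: cbox_interval)
qed

lemma continuous_on_pd1:
  assumes f: "holo2 f U"
  shows "continuous_on U (pd1 f)"
proof -
  have "isCont (pd1 f) (x0, y0)" if p0: "(x0, y0) \<in> U" for x0 y0
  proof -
    obtain r where r: "r > 0" "cball x0 (2 * r) \<times> ball y0 r \<subseteq> U"
      using open_contains_cball_times_ball[OF holo2_open[OF f] p0] .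
    let ?N = "ball x0 r \<times> ball y0 r"
    have "continuous_on ?N
        (\<lambda>p. integral {0..1} (cauchy_kernel f x0 (2 * r) (fst p) (snd p)) / (2 * of_real pi * \<i>))"
      using continuous_on_cauchy_integral[OF holo2_continuous_on[OF f] r]
      by (intro continuous_intros) auto
    moreover have "integral {0..1} (cauchy_kernel f x0 (2 * r) (fst p) (snd p)) / (2 * of_real pi * \<i>)
        = pd1 f p" if "p \<in> ?N" for p
      using pd1_eq_cauchy_integral[OF f, of x0 "2 * r" "snd p" "fst p"] that r by force
    ultimately have "continuous_on ?N (pd1 f)"
      by (rule continuous_on_eq)
    moreover have "open ?N" "(x0, y0) \<in> ?N" using r by (auto simp: open_Times)
    ultimately show ?thesis using continuous_on_eq_continuous_at by blast
  qed
  then show ?thesis by (auto intro: continuous_at_imp_continuous_on)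
qed

lemma holo2_swap: "holo2 f U \<Longrightarrow> holo2 (f \<circ> prod.swap) (prod.swap -` U)"
proof -
  assume f: "holo2 f U"
  have "open (prod.swap -` U)"
    by (rule continuous_open_vimage[OF holo2_open[OF f] isCont_swap])
  from holo2_compose_pair[OF f holo2_snd[OF this] holo2_fst[OF this]]
  show ?thesis by (simp add: o_def prod.swap_def)
qed

lemma pd1_swap: "pd1 (f \<circ> prod.swap) = pd2 f \<circ> prod.swap"
  by (simp add: fun_eq_iff pd1_def pd2_def)

lemma continuous_on_swap_iff:
  "continuous_on (prod.swap -` U) (g \<circ> prod.swap) \<longleftrightarrow> continuous_on U g"
proof
  assume "continuous_on (prod.swap -` U) (g \<circ> prod.swap)"
  moreover have "prod.swap ` U \<subseteq> prod.swap -` U" by auto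
  ultimately show "continuous_on U g"
    using continuous_on_compose2[OF _ continuous_on_swap] by (fastforce simp: o_def)
next
  assume "continuous_on U g"
  from continuous_on_compose2[OF this continuous_on_swap, of "prod.swap -` U"]
  show "continuous_on (prod.swap -` U) (g \<circ> prod.swap)" by (simp add: o_def)
qed

lemma continuous_on_pd2: "holo2 f U \<Longrightarrow> continuous_on U (pd2 f)"
  using continuous_on_pd1[OF holo2_swap, of f U] unfolding pd1_swap continuous_on_swap_iff .

lemma has_field_derivative_cauchy_integral_param:
  assumes f: "holo2 f U" and r: "r > 0" and box: "cball x0 (2 * r) \<times> ball y0 r \<subseteq> U"
    and x: "x \<in> ball x0 (2 * r)" and y: "y \<in> ball y0 r"
  shows "((\<lambda>v. integral {0..1} (cauchy_kernel f x0 (2 * r) x v)) has_field_derivative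
           integral {0..1} (cauchy_kernel (pd2 f) x0 (2 * r) x y)) (at y)"
proof -
  let ?Y = "ball y0 r"
  have inU: "(circlepath x0 (2 * r) t, v) \<in> U" if "v \<in> ?Y" for t v
    using box circlepath_in_cball[of "2 * r" x0 t] r that by auto
  have kernel_cont: "continuous_on (({x} \<times> ?Y) \<times> {0..1})
      (\<lambda>(p, t). cauchy_kernel g x0 (2 * r) (fst p) (snd p) t)" if "continuous_on U g" for g
    by (rule continuous_on_cauchy_kernel[OF that]) (use r x box in auto)
  have "((\<lambda>v. cauchy_kernel f x0 (2 * r) x v t) has_field_derivative
      cauchy_kernel (pd2 f) x0 (2 * r) x v t) (at v within ?Y)" if "v \<in> ?Y" for v t
    unfolding cauchy_kernel_def
    by (rule has_field_derivative_at_within)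
      (intro DERIV_cmult_right DERIV_cdivide holo2_DERIV_pd2[OF f inU[OF that]])
  moreover have "cauchy_kernel f x0 (2 * r) x v integrable_on cbox 0 1" if "v \<in> ?Y" for v
  proof (rule integrable_continuous, unfold cbox_interval)
    have "continuous_on {0..1} (\<lambda>t. ((x, v), t))" by (intro continuous_intros)
    moreover have "(\<lambda>t. ((x, v), t)) ` {0..1} \<subseteq> ({x} \<times> ?Y) \<times> {0..1}"
      using that by auto
    ultimately show "continuous_on {0..1} (cauchy_kernel f x0 (2 * r) x v)"
      using continuous_on_compose2[OF kernel_cont[OF holo2_continuous_on[OF f]]] by fastforce
  qed
  moreover have "continuous_on (?Y \<times> cbox 0 1) (\<lambda>(v, t). cauchy_kernel (pd2 f) x0 (2 * r) x v t)"
  proof (unfold cbox_interval)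
    have "continuous_on (?Y \<times> {0..1}) (\<lambda>z. ((x, fst z), snd z))" by (intro continuous_intros)
    moreover have "(\<lambda>z. ((x, fst z), snd z)) ` (?Y \<times> {0..1}) \<subseteq> ({x} \<times> ?Y) \<times> {0..1}"
      by auto
    ultimately show "continuous_on (?Y \<times> {0..1}) (\<lambda>(v, t). cauchy_kernel (pd2 f) x0 (2 * r) x v t)"
      using continuous_on_compose2[OF kernel_cont[OF continuous_on_pd2[OF f]]] by (fastforce simp: split_beta)
  qed
  ultimately have "((\<lambda>v. integral (cbox 0 1) (cauchy_kernel f x0 (2 * r) x v)) has_field_derivative
      integral (cbox 0 1) (cauchy_kernel (pd2 f) x0 (2 * r) x y)) (at y within ?Y)"
    using y by (intro leibniz_rule_field_derivative) auto
  then show ?thesis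
    using at_within_open[OF y] by (simp add: cbox_interval)
qed

lemma pd1_has_field_derivative_second:
  assumes f: "holo2 f U" and r: "r > 0" and box: "cball x0 (2 * r) \<times> ball y0 r \<subseteq> U"
    and x: "x \<in> ball x0 r" and y: "y \<in> ball y0 r"
  shows "((\<lambda>v. pd1 f (x, v)) has_field_derivative
           integral {0..1} (cauchy_kernel (pd2 f) x0 (2 * r) x y) / (2 * of_real pi * \<i>)) (at y)"
proof (rule has_field_derivative_transform_within_open[OF _ open_ball y])
  have x': "x \<in> ball x0 (2 * r)" using x r by auto
  show "((\<lambda>v. integral {0..1} (cauchy_kernel f x0 (2 * r) x v) / (2 * of_real pi * \<i>)) has_field_derivative
      integral {0..1} (cauchy_kernel (pd2 f) x0 (2 * r) x y) / (2 * of_real pi * \<i>)) (at y)"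
    by (intro DERIV_cdivide has_field_derivative_cauchy_integral_param[OF f r box x' y])
  show "integral {0..1} (cauchy_kernel f x0 (2 * r) x v) / (2 * of_real pi * \<i>) = pd1 f (x, v)"
    if "v \<in> ball y0 r" for v
  proof -
    have "cball x0 (2 * r) \<times> {v} \<subseteq> U" using box that by auto
    then show ?thesis by (simp add: pd1_eq_cauchy_integral[OF f _ x'])
  qed
qed

text \<open>The partial derivative in \<open>x\<close> is holomorphic in \<open>x\<close>, and its partial derivative in
  \<open>y\<close> is continuous; this gives joint differentiability.\<close>

lemma holo2_pd1:
  assumes f: "holo2 f U"
  shows "holo2 (pd1 f) U"
  unfolding holo2_iff
proof (intro conjI ballI)
  show "open U" by (rule holo2_open[OF f])
  fix p0 assume p0: "p0 \<in> U"
  obtain x0 y0 where p0_eq: "p0 = (x0, y0)" by force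
  obtain r where r: "r > 0" and box: "cball x0 (2 * r) \<times> ball y0 r \<subseteq> U"
    using open_contains_cball_times_ball[OF holo2_open[OF f] p0[unfolded p0_eq]] .
  let ?X = "ball x0 r" and ?Y = "ball y0 r" and ?S = "{u. (u, y0) \<in> U}"
  define J where "J x y = integral {0..1} (cauchy_kernel (pd2 f) x0 (2 * r) x y) / (2 * of_real pi * \<i>)"
    for x y
  have x0: "x0 \<in> ?X" and y0: "y0 \<in> ?Y" using r by auto
  have "deriv (\<lambda>u. f (u, y0)) holomorphic_on ?S"
    by (rule holomorphic_deriv[OF holo2_slice1_holomorphic[OF f] open_slice1[OF holo2_open[OF f]]])
  then have "((\<lambda>x. pd1 f (x, y0)) has_field_derivative deriv (deriv (\<lambda>u. f (u, y0))) x0) (at x0 within ?X)"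
    using holomorphic_derivI[OF _ open_slice1[OF holo2_open[OF f]]] p0 p0_eq
    by (simp add: pd1_def)
  then have fx: "((\<lambda>x. pd1 f (x, y0)) has_derivative (*) (deriv (deriv (\<lambda>u. f (u, y0))) x0)) (at x0 within ?X)"
    by (simp add: has_field_derivative_def)
  have fy: "((\<lambda>y. pd1 f (x, y)) has_derivative blinfun_apply (blinfun_mult_right (J x y))) (at y within ?Y)"
    if "x \<in> ?X" "y \<in> ?Y" for x y
    using has_field_derivative_at_within[OF pd1_has_field_derivative_second[OF f r box that]]
    by (simp add: J_def has_field_derivative_def)
  have "continuous_on (?X \<times> ?Y) (\<lambda>p. J (fst p) (snd p))"
    unfolding J_def
    using continuous_on_cauchy_integral[OF continuous_on_pd2[OF f] r box] by (intro continuous_intros) auto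
  then have "continuous_on (?X \<times> ?Y) (\<lambda>(x, y). blinfun_mult_right (J x y))"
    by (simp add: split_beta continuous_intros)
  then have fy_cont: "continuous (at (x0, y0) within ?X \<times> ?Y) (\<lambda>(x, y). blinfun_mult_right (J x y))"
    using x0 y0 continuous_on_eq_continuous_within by blast
  have "((\<lambda>(x, y). pd1 f (x, y)) has_derivative
      (\<lambda>(tx, ty). deriv (deriv (\<lambda>u. f (u, y0))) x0 * tx + J x0 y0 * ty)) (at (x0, y0) within ?X \<times> ?Y)"
    using has_derivative_partialsI[OF fx fy fy_cont y0 convex_ball] by simp
  then have "(pd1 f has_derivative linform (deriv (deriv (\<lambda>u. f (u, y0))) x0) (J x0 y0)) (at p0)"
    using at_within_open[of "(x0, y0)" "?X \<times> ?Y"] x0 y0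
    by (simp add: p0_eq linform_def open_Times case_prod_beta')
  then show "\<exists>a b. (pd1 f has_derivative linform a b) (at p0)" by blast
qed

lemma holo2_pd2:
  assumes f: "holo2 f U"
  shows "holo2 (pd2 f) U"
  using holo2_swap[OF holo2_pd1[OF holo2_swap[OF f]]] unfolding pd1_swap by (simp add: comp_def vimage_def)

text \<open>Both sides equal the Cauchy integral of \<open>pd2 f\<close>.\<close>

lemma pd2_pd1_commute:
  assumes f: "holo2 f U" and p: "p \<in> U"
  shows "pd2 (pd1 f) p = pd1 (pd2 f) p"
proof -
  obtain x0 y0 where p_eq: "p = (x0, y0)" by force
  obtain r where r: "r > 0" and box: "cball x0 (2 * r) \<times> ball y0 r \<subseteq> U"
    using open_contains_cball_times_ball[OF holo2_open[OF f] p[unfolded p_eq]] .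
  have "pd2 (pd1 f) (x0, y0) = integral {0..1} (cauchy_kernel (pd2 f) x0 (2 * r) x0 y0) / (2 * of_real pi * \<i>)"
    using r by (intro pd2_eqI pd1_has_field_derivative_second[OF f r box]) auto
  also have "\<dots> = pd1 (pd2 f) (x0, y0)"
    using box r by (intro pd1_eq_cauchy_integral[OF holo2_pd2[OF f], symmetric]) auto
  finally show ?thesis by (simp add: p_eq)
qed

section \<open>Calculus of partial derivatives\<close>

lemma D1_eq: "D1 f = (\<lambda>q. fst q * pd1 f q)"
  by (simp add: fun_eq_iff D1_def)

lemma D2_eq: "D2 f = (\<lambda>q. snd q * pd2 f q)"
  by (simp add: fun_eq_iff D2_def)

lemma delta1_eq_D1: "delta1 = D1"
  by (simp add: fun_eq_iff delta1_def D1_def)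

lemma delta2_eq: "delta2 f = (\<lambda>q. (snd q - 1) * pd2 f q)"
  by (simp add: fun_eq_iff delta2_def)

lemma holo2_D1: "holo2 f U \<Longrightarrow> holo2 (D1 f) U"
  unfolding D1_eq by (intro holo2_mult holo2_fst holo2_open holo2_pd1)

lemma holo2_D2: "holo2 f U \<Longrightarrow> holo2 (D2 f) U"
  unfolding D2_eq by (intro holo2_mult holo2_snd holo2_open holo2_pd2)

lemma pd1_const [simp]: "pd1 (\<lambda>q. c) p = 0" and pd2_const [simp]: "pd2 (\<lambda>q. c) p = 0"
  by (simp_all add: pd1_def pd2_def split_beta)

lemma pd1_fst [simp]: "pd1 fst p = 1" and pd2_fst [simp]: "pd2 fst p = 0"
  and pd1_snd [simp]: "pd1 snd p = 0" and pd2_snd [simp]: "pd2 snd p = 1"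
  by (simp_all add: pd1_def pd2_def split_beta)

lemma pd_add:
  assumes "holo2 f U" "holo2 g U" "(x, y) \<in> U"
  shows "pd1 (\<lambda>q. f q + g q) (x, y) = pd1 f (x, y) + pd1 g (x, y)"
    and "pd2 (\<lambda>q. f q + g q) (x, y) = pd2 f (x, y) + pd2 g (x, y)"
  using assms by (auto intro!: pd1_eqI pd2_eqI DERIV_add holo2_DERIV_pd1 holo2_DERIV_pd2)

lemma pd_minus:
  assumes "holo2 f U" "(x, y) \<in> U"
  shows "pd1 (\<lambda>q. - f q) (x, y) = - pd1 f (x, y)" and "pd2 (\<lambda>q. - f q) (x, y) = - pd2 f (x, y)"
  using assms by (auto intro!: pd1_eqI pd2_eqI DERIV_minus holo2_DERIV_pd1 holo2_DERIV_pd2)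

lemma pd_diff:
  assumes "holo2 f U" "holo2 g U" "(x, y) \<in> U"
  shows "pd1 (\<lambda>q. f q - g q) (x, y) = pd1 f (x, y) - pd1 g (x, y)"
    and "pd2 (\<lambda>q. f q - g q) (x, y) = pd2 f (x, y) - pd2 g (x, y)"
  using assms by (auto intro!: pd1_eqI pd2_eqI DERIV_diff holo2_DERIV_pd1 holo2_DERIV_pd2)

lemma pd_mult:
  assumes "holo2 f U" "holo2 g U" "(x, y) \<in> U"
  shows "pd1 (\<lambda>q. f q * g q) (x, y) = pd1 f (x, y) * g (x, y) + pd1 g (x, y) * f (x, y)"
    and "pd2 (\<lambda>q. f q * g q) (x, y) = pd2 f (x, y) * g (x, y) + pd2 g (x, y) * f (x, y)"
  using assms by (auto intro!: pd1_eqI pd2_eqI DERIV_mult holo2_DERIV_pd1 holo2_DERIV_pd2)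

section \<open>The change of variables\<close>

lemma holo2_DERIV_compose_curve:
  assumes g: "holo2 g V" "(\<alpha> x, \<beta> x) \<in> V"
    and \<alpha>: "(\<alpha> has_field_derivative d\<alpha>) (at x)" and \<beta>: "(\<beta> has_field_derivative d\<beta>) (at x)"
  shows "((\<lambda>u. g (\<alpha> u, \<beta> u)) has_field_derivative
           pd1 g (\<alpha> x, \<beta> x) * d\<alpha> + pd2 g (\<alpha> x, \<beta> x) * d\<beta>) (at x)"
  unfolding has_field_derivative_def
  by (rule has_derivative_eq_rhs[OF has_derivative_compose[OF has_derivative_Pair[OF
        \<alpha>[unfolded has_field_derivative_def] \<beta>[unfolded has_field_derivative_def]] holo2_has_derivative[OF g]]])
    (simp add: fun_eq_iff linform_def algebra_simps)

lemma mult_powr_minus_one: "(w :: complex) \<noteq> 0 \<Longrightarrow> w * w powr (s - 1) = w powr s"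
  by (simp add: powr_def exp_diff left_diff_distrib)

lemma Dom_memD: "(t1, t2) \<in> Dom \<Longrightarrow> t1 \<noteq> 0 \<and> t2 \<noteq> 0 \<and> t2 \<notin> \<real>\<^sub>\<le>\<^sub>0"
  by (auto simp: Dom_def complex_nonpos_Reals_iff)

lemma cov_image_eq:
  assumes "U \<subseteq> Dom"
  shows "cov ` U = cov -` U \<inter> {q. fst q \<noteq> 0 \<and> snd q \<noteq> 0}"
proof (intro set_eqI iffI)
  fix q assume "q \<in> cov ` U"
  then obtain t1 t2 where "(t1, t2) \<in> U" "q = cov (t1, t2)" by force
  with Dom_memD assms show "q \<in> cov -` U \<inter> {q. fst q \<noteq> 0 \<and> snd q \<noteq> 0}" by (auto simp: cov_def)
next
  fix q assume q: "q \<in> cov -` U \<inter> {q. fst q \<noteq> 0 \<and> snd q \<noteq> 0}"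
  then have "q = cov (cov q)" by (auto simp: cov_def split_beta)
  moreover have "cov q \<in> U" using q by simp
  ultimately show "q \<in> cov ` U" by (rule image_eqI)
qed

lemma open_cov_image:
  assumes "open U" "U \<subseteq> Dom"
  shows "open (cov ` U)"
proof -
  let ?S = "{q :: complex \<times> complex. fst q \<noteq> 0 \<and> snd q \<noteq> 0}"
  have "?S = (- {0}) \<times> (- {0})" by auto
  then have "open ?S" by (simp add: open_Times open_Compl)
  moreover have "continuous_on ?S cov"
    unfolding cov_def case_prod_beta' by (intro continuous_intros) auto
  ultimately have "open (cov -` U \<inter> ?S)"
    using continuous_on_open_vimage assms(1) by blast
  then show ?thesis by (simp add: cov_image_eq[OF assms(2)])
qed

definition cov_related :: "complex \<Rightarrow> (complex \<times> complex) set \<Rightarrow> fn2 \<Rightarrow> fn2 \<Rightarrow> bool" where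
  "cov_related b' U y z \<longleftrightarrow>
     holo2 y (cov ` U) \<and> holo2 z U \<and> (\<forall>p\<in>U. y (cov p) = snd p powr b' * z p)"

text \<open>Differentiate \<open>g (t1, t1 / t2) = t2 powr b' * h (t1, t2)\<close> in \<open>t1\<close> and in \<open>t2\<close>.\<close>

lemma cov_related_pd_at:
  assumes rel: "cov_related b' U g h" and U: "U \<subseteq> Dom" and p: "(t1, t2) \<in> U"
  shows "pd1 g (cov (t1, t2)) + pd2 g (cov (t1, t2)) / t2 = t2 powr b' * pd1 h (t1, t2)"
    and "- pd2 g (cov (t1, t2)) * t1 / t2^2 = b' * t2 powr (b' - 1) * h (t1, t2) + pd2 h (t1, t2) * t2 powr b'"
proof -
  have g: "holo2 g (cov ` U)" and h: "holo2 h U" and eq: "\<And>p. p \<in> U \<Longrightarrow> g (cov p) = snd p powr b' * h p"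
    using rel by (auto simp: cov_related_def)
  have t: "t1 \<noteq> 0" "t2 \<noteq> 0" "t2 \<notin> \<real>\<^sub>\<le>\<^sub>0" using Dom_memD U p by auto
  have "cov (t1, t2) \<in> cov ` U" using p by blast
  then have q: "(t1, t1 / t2) \<in> cov ` U" by (simp add: cov_def)
  have "((\<lambda>u. g (u, u / t2)) has_field_derivative
      pd1 g (t1, t1 / t2) * 1 + pd2 g (t1, t1 / t2) * (1 / t2)) (at t1)"
    by (rule holo2_DERIV_compose_curve[OF g, of "\<lambda>u. u" _ "\<lambda>u. u / t2"])
      (use q t in \<open>auto intro!: derivative_eq_intros\<close>)
  moreover have "((\<lambda>u. g (u, u / t2)) has_field_derivative t2 powr b' * pd1 h (t1, t2)) (at t1)"
  proof (rule has_field_derivative_transform_within_open[OF _ open_slice1[OF holo2_open[OF h]]])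
    show "((\<lambda>u. t2 powr b' * h (u, t2)) has_field_derivative t2 powr b' * pd1 h (t1, t2)) (at t1)"
      by (intro DERIV_cmult holo2_DERIV_pd1[OF h p])
  qed (use p eq in \<open>auto simp: cov_def\<close>)
  ultimately show "pd1 g (cov (t1, t2)) + pd2 g (cov (t1, t2)) / t2 = t2 powr b' * pd1 h (t1, t2)"
    by (simp add: DERIV_unique cov_def)
  have "((\<lambda>v. g (t1, t1 / v)) has_field_derivative
      pd1 g (t1, t1 / t2) * 0 + pd2 g (t1, t1 / t2) * (- t1 / t2^2)) (at t2)"
    by (rule holo2_DERIV_compose_curve[OF g, of "\<lambda>v. t1" _ "\<lambda>v. t1 / v"])
      (use q t in \<open>auto intro!: derivative_eq_intros simp: power2_eq_square\<close>)
  moreover have "((\<lambda>v. g (t1, t1 / v)) has_field_derivative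
      b' * t2 powr (b' - 1) * h (t1, t2) + pd2 h (t1, t2) * t2 powr b') (at t2)"
  proof (rule has_field_derivative_transform_within_open[OF _ open_slice2[OF holo2_open[OF h]]])
    show "((\<lambda>v. v powr b' * h (t1, v)) has_field_derivative
        b' * t2 powr (b' - 1) * h (t1, t2) + pd2 h (t1, t2) * t2 powr b') (at t2)"
      by (intro DERIV_mult has_field_derivative_powr t(3) holo2_DERIV_pd2[OF h p])
  qed (use p eq in \<open>auto simp: cov_def\<close>)
  ultimately show "- pd2 g (cov (t1, t2)) * t1 / t2^2
      = b' * t2 powr (b' - 1) * h (t1, t2) + pd2 h (t1, t2) * t2 powr b'"
    by (simp add: DERIV_unique cov_def)
qed

lemma cov_related_D1_D2_at:
  assumes rel: "cov_related b' U g h" and U: "U \<subseteq> Dom" and p: "(t1, t2) \<in> U"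
  shows "D1 g (cov (t1, t2)) = t2 powr b' * (D1 h (t1, t2) + D2 h (t1, t2) + b' * h (t1, t2))"
    and "D2 g (cov (t1, t2)) = t2 powr b' * (- D2 h (t1, t2) - b' * h (t1, t2))"
proof -
  note pd = cov_related_pd_at[OF rel U p]
  have t: "t1 \<noteq> 0" "t2 \<noteq> 0" using Dom_memD U p by auto
  have "D2 g (cov (t1, t2)) = - t2 * (- pd2 g (cov (t1, t2)) * t1 / t2^2)"
    using t by (simp add: D2_def cov_def field_simps power2_eq_square)
  also have "\<dots> = t2 powr b' * (- D2 h (t1, t2) - b' * h (t1, t2))"
    unfolding pd(2) using mult_powr_minus_one[OF t(2), of b'] by (simp add: D2_def algebra_simps)
  finally show D2: "D2 g (cov (t1, t2)) = t2 powr b' * (- D2 h (t1, t2) - b' * h (t1, t2))" .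
  have "D1 g (cov (t1, t2)) = t1 * (t2 powr b' * pd1 h (t1, t2)) - D2 g (cov (t1, t2))"
    using t by (simp add: D1_def D2_def cov_def pd(1)[symmetric] field_simps)
  then show "D1 g (cov (t1, t2)) = t2 powr b' * (D1 h (t1, t2) + D2 h (t1, t2) + b' * h (t1, t2))"
    by (simp add: D2 D1_def algebra_simps)
qed

lemma cov_related_D1:
  assumes rel: "cov_related b' U g h" and U: "U \<subseteq> Dom"
  shows "cov_related b' U (D1 g) (\<lambda>p. D1 h p + D2 h p + b' * h p)"
  using rel cov_related_D1_D2_at(1)[OF rel U, of "fst p" "snd p" for p]
  by (auto simp: cov_related_def intro!: holo2_add holo2_cmult holo2_D1 holo2_D2)

lemma cov_related_D2:
  assumes rel: "cov_related b' U g h" and U: "U \<subseteq> Dom"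
  shows "cov_related b' U (D2 g) (\<lambda>p. - D2 h p - b' * h p)"
  using rel cov_related_D1_D2_at(2)[OF rel U, of "fst p" "snd p" for p]
  by (auto simp: cov_related_def intro!: holo2_diff holo2_minus holo2_cmult holo2_D2)

lemma cov_related_D:
  assumes rel: "cov_related b' U g h" and U: "U \<subseteq> Dom"
  shows "cov_related b' U (opadd D1 D2 g) (D1 h)"
proof -
  have "opadd D1 D2 g (cov (t1, t2)) = t2 powr b' * D1 h (t1, t2)" if "(t1, t2) \<in> U" for t1 t2
    unfolding opadd_def cov_related_D1_D2_at[OF rel U that] by (simp add: algebra_simps)
  then show ?thesis
    using rel by (auto simp: cov_related_def opadd_def intro!: holo2_add holo2_D1 holo2_D2)
qed

lemma cov_related_opshift:
  assumes "cov_related b' U g h" "cov_related b' U (A g) (B h)"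
  shows "cov_related b' U (opshift A c g) (opshift B c h)"
  using assms by (auto simp: cov_related_def opshift_def algebra_simps intro!: holo2_add holo2_cmult)

lemma cov_related_opprod:
  assumes "\<And>i g h. cov_related b' U g h \<Longrightarrow> cov_related b' U (A i g) (B i h)" "cov_related b' U g h"
  shows "cov_related b' U (opprod A n g) (opprod B n h)"
  using assms by (induction n) auto

lemma cov_related_ytrans:
  assumes z: "holo2 z U" and U: "U \<subseteq> Dom"
  shows "cov_related b' U (ytrans b' z) z"
proof -
  let ?V = "cov ` U"
  have V: "open ?V" by (rule open_cov_image[OF holo2_open[OF z] U])
  have V_mem: "fst q \<noteq> 0 \<and> snd q \<noteq> 0 \<and> cov q \<in> U" if "q \<in> ?V" for q
    using that cov_image_eq[OF U] by blast
  have ratio: "holo2 (\<lambda>q. fst q / snd q) ?V"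
    using holo2_fst_div_snd[OF V] V_mem by blast
  have "fst q / snd q \<notin> \<real>\<^sub>\<le>\<^sub>0" if q: "q \<in> ?V" for q
  proof -
    obtain t1 t2 where t: "(t1, t2) \<in> U" "q = (t1, t1 / t2)"
      using q by (auto simp: cov_def)
    with Dom_memD U have "t1 \<noteq> 0" "t2 \<notin> \<real>\<^sub>\<le>\<^sub>0" by auto
    with t show ?thesis by simp
  qed
  moreover have "(\<lambda>w. w powr b') holomorphic_on - \<real>\<^sub>\<le>\<^sub>0"
    by (rule analytic_imp_holomorphic, rule analytic_on_powr[OF analytic_on_ident analytic_on_const]) auto
  ultimately have "holo2 (\<lambda>q. (fst q / snd q) powr b') ?V"
    by (intro holo2_compose_holomorphic[OF ratio _ open_Compl[OF closed_nonpos_Reals_complex]]) auto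
  moreover have "holo2 (\<lambda>q. z (fst q, fst q / snd q)) ?V"
    by (rule holo2_compose_pair[OF z holo2_fst[OF V] ratio]) (use V_mem in \<open>auto simp: cov_def split_beta\<close>)
  ultimately have "holo2 (ytrans b' z) ?V"
    unfolding ytrans_def case_prod_beta' by (rule holo2_mult)
  moreover have "ytrans b' z (cov (t1, t2)) = t2 powr b' * z (t1, t2)" if "(t1, t2) \<in> U" for t1 t2
    using that Dom_memD U by (auto simp: ytrans_def cov_def)
  ultimately show ?thesis using z by (auto simp: cov_related_def)
qed

lemma cov_related_opsub:
  assumes "cov_related b' U (A g) (A' h)" "cov_related b' U (B g) (B' h)"
  shows "cov_related b' U (opsub A B g) (opsub A' B' h)"
  using assms by (auto simp: cov_related_def opsub_def algebra_simps intro!: holo2_diff)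

lemma cov_related_opmul:
  assumes "cov_related b' U (A g) (A' h)"
    and "holo2 a (cov ` U)" "holo2 a' U" "\<And>p. p \<in> U \<Longrightarrow> a (cov p) = a' p"
  shows "cov_related b' U (opmul a A g) (opmul a' A' h)"
  using assms by (auto simp: cov_related_def opmul_def intro!: holo2_mult)

lemma cov_related_zero_iff:
  assumes rel: "cov_related b' U g h" and U: "U \<subseteq> Dom"
  shows "(\<forall>q\<in>cov ` U. g q = 0) \<longleftrightarrow> (\<forall>p\<in>U. h p = 0)"
proof -
  have "snd p powr b' \<noteq> 0" if "p \<in> U" for p
    using that U Dom_memD[of "fst p" "snd p"] by (auto simp: powr_def)
  then show ?thesis using rel by (auto simp: cov_related_def)
qed

section \<open>The two systems\<close>

text \<open>The second system in the variables \<open>t\<close> with the factor \<open>t2 powr b'\<close> removed: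
  \<open>s1 = t1\<close>, \<open>s2 = t1 / t2\<close>, and \<open>D1, D2\<close> act as \<open>T1, T2\<close>
  (see \<open>cov_related_D1_D2_at\<close>).\<close>

definition sys2_pullback :: "nat \<Rightarrow> (nat \<Rightarrow> complex) \<Rightarrow> (nat \<Rightarrow> complex) \<Rightarrow> complex \<Rightarrow> complex
    \<Rightarrow> fn2 \<Rightarrow> (complex \<times> complex) set \<Rightarrow> bool" where
  "sys2_pullback n b c b' c' z U \<longleftrightarrow>
    (let T1 = (\<lambda>f p. D1 f p + D2 f p + b' * f p);
         T2 = (\<lambda>f p. - D2 f p - b' * f p);
         P = opprod (\<lambda>i. opshift D1 (b i)) n;
         Q = opprod (\<lambda>i. opshift D1 (c i - 1)) n;
         G1 = opsub (opmul fst (opshift T1 (c' - b') \<circ> P)) (T1 \<circ> Q);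
         G2 = opsub (opmul (\<lambda>p. fst p / snd p) (opshift T2 b' \<circ> P)) (T2 \<circ> Q);
         G3 = opsub (opmul fst (opshift T1 (c' - b') \<circ> T2)) (opmul (\<lambda>p. fst p / snd p) (opshift T2 b' \<circ> T1))
     in \<forall>p\<in>U. G1 z p = 0 \<and> G2 z p = 0 \<and> G3 z p = 0)"

lemma sys2_iff_pullback:
  assumes z: "holo2 z U" and U: "U \<subseteq> Dom"
  shows "sys2 n b (c' - b') b' c (ytrans b' z) (cov ` U) \<longleftrightarrow> sys2_pullback n b c b' c' z U"
proof -
  have U_open: "open U" and V_open: "open (cov ` U)"
    using holo2_open[OF z] open_cov_image[OF _ U] by auto
  have rel: "cov_related b' U (ytrans b' z) z"
    by (rule cov_related_ytrans[OF z U])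
  have rel_prod: "cov_related b' U (opprod (\<lambda>i. opshift (opadd D1 D2) (a i)) n (ytrans b' z))
      (opprod (\<lambda>i. opshift D1 (a i)) n z)" for a
  proof (rule cov_related_opprod[OF _ rel])
    show "cov_related b' U (opshift (opadd D1 D2) (a i) g) (opshift D1 (a i) h)"
      if "cov_related b' U g h" for i g h
      using that cov_related_D[OF that U] by (rule cov_related_opshift)
  qed
  have s1: "holo2 fst (cov ` U)" "holo2 fst U" "fst (cov p) = fst p" for p
    using holo2_fst V_open U_open by (auto simp: cov_def split_beta)
  have "holo2 (\<lambda>p. fst p / snd p) U"
    using holo2_fst_div_snd[OF U_open] U Dom_memD by fastforce
  then have s2: "holo2 snd (cov ` U)" "holo2 (\<lambda>p. fst p / snd p) U" "snd (cov p) = fst p / snd p" for p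
    using holo2_snd V_open by (auto simp: cov_def split_beta)
  note rules = cov_related_opsub cov_related_opmul cov_related_opshift cov_related_D1 cov_related_D2
  show ?thesis
    unfolding sys2_def sys2_pullback_def Let_def ball_conj_distrib
    by (intro conj_cong cov_related_zero_iff[OF _ U, where b'=b'] refl)
      (rule rules rel rel_prod s1 s2 U | simp only: o_apply)+
qed

lemma continuous_on_vanishing_off_line:
  fixes g :: "complex \<times> complex \<Rightarrow> complex"
  assumes U: "open U" and g: "continuous_on U g"
    and off: "\<And>p. p \<in> U \<Longrightarrow> snd p \<noteq> 1 \<Longrightarrow> g p = 0" and p: "p \<in> U"
  shows "g p = 0"
proof (cases "snd p = 1")
  case True
  define X where "X k = p + (0, of_real (inverse (real (Suc k))))" for k
  have "(\<lambda>k. of_real (inverse (real (Suc k))) :: complex) \<longlonglongrightarrow> 0"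
    using tendsto_of_real[OF LIMSEQ_inverse_real_of_nat] by (simp only: of_real_0)
  then have "X \<longlonglongrightarrow> p + (0, 0)"
    unfolding X_def by (intro tendsto_add tendsto_Pair tendsto_const)
  then have X: "X \<longlonglongrightarrow> p" by (simp add: zero_prod_def[symmetric])
  have ev: "eventually (\<lambda>k. X k \<in> U) sequentially"
    using X U p by (simp add: tendsto_def)
  have lim: "((\<lambda>k. g (X k)) \<longlongrightarrow> g p) sequentially"
    using continuous_on_tendsto_compose[OF g X p ev] .
  from ev have "eventually (\<lambda>k. g (X k) = 0) sequentially"
  proof eventually_elim
    case (elim k)
    moreover have "snd (X k) \<noteq> 1"
    proof -
      have "1 + of_nat k \<noteq> (0 :: complex)"
        using of_nat_neq_0[of k, where 'a=complex] unfolding of_nat_Suc .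
      then show ?thesis using True by (simp add: X_def)
    qed
    ultimately show ?case by (rule off)
  qed
  then have "((\<lambda>k. g (X k)) \<longlongrightarrow> 0) sequentially" by (rule tendsto_eventually)
  with lim show ?thesis by (rule LIMSEQ_unique)
qed (use off p in blast)

lemma vanishing_iff_of_combinations:
  fixes e1 e2 e3 g1 g2 g3 :: "complex \<times> complex \<Rightarrow> complex"
  assumes U: "open U" "\<And>t1 t2. (t1, t2) \<in> U \<Longrightarrow> t1 \<noteq> 0"
    and g: "continuous_on U g2" "continuous_on U g3"
    and e: "\<And>t1 t2. (t1, t2) \<in> U \<Longrightarrow> e1 (t1, t2) = g1 (t1, t2) + g2 (t1, t2)
      \<and> t1 * e2 (t1, t2) = (t2 - 1) * g3 (t1, t2) \<and> e3 (t1, t2) = (1 - t2) * g2 (t1, t2)"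
  shows "(\<forall>p\<in>U. e1 p = 0 \<and> e2 p = 0 \<and> e3 p = 0) \<longleftrightarrow>
           (\<forall>p\<in>U. g1 p = 0 \<and> g2 p = 0 \<and> g3 p = 0)"
proof
  assume E: "\<forall>p\<in>U. e1 p = 0 \<and> e2 p = 0 \<and> e3 p = 0"
  have "g2 p = 0" if "p \<in> U" for p
    by (rule continuous_on_vanishing_off_line[OF U(1) g(1) _ that]) (use E e in force)
  moreover have "g3 p = 0" if "p \<in> U" for p
    by (rule continuous_on_vanishing_off_line[OF U(1) g(2) _ that]) (use E e in force)
  ultimately show "\<forall>p\<in>U. g1 p = 0 \<and> g2 p = 0 \<and> g3 p = 0"
    using E e by force
next
  assume "\<forall>p\<in>U. g1 p = 0 \<and> g2 p = 0 \<and> g3 p = 0"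
  then show "\<forall>p\<in>U. e1 p = 0 \<and> e2 p = 0 \<and> e3 p = 0"
    using U(2) e by force
qed

lemma sys1_iff_pullback:
  assumes z: "holo2 z U" and U: "U \<subseteq> Dom"
  shows "sys1 n b c b' c' z U \<longleftrightarrow> sys2_pullback n b c b' c' z U"
proof -
  have U_open: "open U" by (rule holo2_open[OF z])
  have nz: "fst p \<noteq> 0" "snd p \<noteq> 0" if "p \<in> U" for p
    using that U Dom_memD[of "fst p" "snd p"] by auto
  define P where "P = opprod (\<lambda>i. opshift D1 (b i)) n z"
  define Q where "Q = opprod (\<lambda>i. opshift D1 (c i - 1)) n z"
  have P: "holo2 P U" and Q: "holo2 Q U"
    unfolding P_def Q_def by (auto intro!: holo2_opprod holo2_opshift holo2_D1 z)
  note pd_rules = pd_add[where U=U] pd_minus[where U=U] pd_diff[where U=U] pd_mult[where U=U]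
  note holo2_rules = holo2_const[OF U_open] holo2_fst[OF U_open] holo2_snd[OF U_open]
    holo2_add holo2_diff holo2_mult holo2_minus holo2_pd1 holo2_pd2
  have "holo2 (\<lambda>p. fst p / snd p) U"
    using holo2_fst_div_snd[OF U_open] nz(2) by blast
  note holo2_G = holo2_diff holo2_mult holo2_add holo2_minus holo2_cmult holo2_opshift this
    holo2_fst[OF U_open] holo2_D1 holo2_D2 Q
  have pointwise: "t1 \<noteq> 0" "t2 \<noteq> 0" "pd2 (pd1 z) (t1, t2) = pd1 (pd2 z) (t1, t2)" if "(t1, t2) \<in> U" for t1 t2
    using nz[OF that] pd2_pd1_commute[OF z that] by auto
  show ?thesis
    unfolding sys1_def sys2_pullback_def Let_def delta1_eq_D1 opsub_def opmul_def opadd_def o_def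
    unfolding P_def[symmetric] Q_def[symmetric]
  proof (rule vanishing_iff_of_combinations[OF U_open], goal_cases)
    case (1 t1 t2)
    then show ?case using pointwise by blast
  next
    case 2
    show ?case by (intro holo2_continuous_on holo2_G P)
  next
    case 3
    show ?case by (intro holo2_continuous_on holo2_G z)
  next
    case (4 t1 t2)
    with pointwise[OF this] show ?case
      by (simp add: opshift_def D1_eq D2_eq delta2_eq pd_rules holo2_rules z P Q) (simp add: algebra_simps)
  qed
qed

theorem theorem6p1:
  fixes n :: nat and b c :: "nat \<Rightarrow> complex" and b' c' :: complex
    and U :: "(complex \<times> complex) set" and z :: fn2
  assumes "n \<ge> 1" and "open U" and "U \<subseteq> Dom" and "holo2 z U"
  shows "sys1 n b c b' c' z U \<longleftrightarrow> sys2 n b (c' - b') b' c (ytrans b' z) (cov ` U)"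
  using sys1_iff_pullback[OF assms(4,3)] sys2_iff_pullback[OF assms(4,3)] by simp

end
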